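(* For each prime $p$, we have $\mathcal U_p=\bigcup_{k\ge1}\mathcal U_{p,k}$.
   Context: For a prime $p$, $\mathcal U_p$ is the set of positive integers that divide $p^n+1$ for some positive integer $n$. For coprime integers $a,b$ with $b>0$, $\ell_a(b)$ is the multiplicative order of $a$ modulo $b$; $v_l(n)$ is the exponent of the prime $l$ in $n$. For a prime $p$ and positive integer $k$, $\mathcal U_{p,k}$ is the set of positive integers $d$ coprime to $p$ such that: for each odd prime $r\mid d$ we have $v_2(\ell_p(r))=k$; if $p>2$ and $k=1$ then $v_2(d)\le v_2(p+1)$; and if $p>2$ and $k>1$ then $v_2(d)\le 1$. *)

theory Defs
  imports "HOL-Number_Theory.Number_Theory"
begin

definition U :: "nat \<Rightarrow> nat set" where
  "U p = {d. d > 0 \<and> (\<exists>n>0. d dvd p ^ n + 1)}"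

definition Uk :: "nat \<Rightarrow> nat \<Rightarrow> nat set" where
  "Uk p k = {d. d > 0 \<and> coprime d p
      \<and> (\<forall>r. prime r \<and> odd r \<and> r dvd d \<longrightarrow> multiplicity 2 (ord r p) = k)
      \<and> (p > 2 \<and> k = 1 \<longrightarrow> multiplicity 2 d \<le> multiplicity 2 (p + 1))
      \<and> (p > 2 \<and> k > 1 \<longrightarrow> multiplicity 2 d \<le> 1)}"

end

theory Submission
  imports Defs
begin

text \<open>If \<open>d\<close> divides \<open>p^n + 1\<close>, then for every odd prime \<open>r\<close> dividing \<open>d\<close> the
order of \<open>p\<close> modulo \<open>r\<close> divides \<open>2n\<close> but not \<open>n\<close>, which forces
\<open>v\<^sub>2(ord\<^sub>r p) = v\<^sub>2(n) + 1\<close>; the power of 2 in \<open>d\<close> is bounded because \<open>p^n + 1\<close> has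
2-adic valuation \<open>v\<^sub>2(p + 1)\<close> for odd \<open>n\<close> and exactly 1 for even \<open>n\<close> (\<open>p\<close> odd).
Conversely, if all these orders have 2-adic valuation \<open>k\<close>, every odd prime factor of
\<open>d\<close> divides \<open>p^N + 1\<close> for \<open>N = 2^(k-1) w\<close>, \<open>w\<close> a common odd multiple of the odd
parts of the orders. Since \<open>x \<equiv> -1 (mod r)\<close> implies that \<open>r\<close> divides
\<open>(x^r + 1)/(x + 1)\<close>, these primes lift to the odd part \<open>m\<close> of \<open>d\<close> dividing \<open>p^(Nm) + 1\<close>,
and the 2-part of \<open>d\<close> divides \<open>p^(Nm) + 1\<close> by the valuation bounds above.\<close>

lemma pow_plus_one_eq_mult_alternating_sum:
  fixes y :: int
  assumes "odd n"
  shows "y ^ n + 1 = (y + 1) * (\<Sum>i<n. (-y) ^ i)"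
proof -
  have "(1 + y) * (\<Sum>i<n. (-y) ^ i) = 1 - (-y) ^ n"
    by (induction n) (auto simp: algebra_simps)
  with assms show ?thesis by (simp add: add.commute)
qed

lemma alternating_sum_cong:
  fixes y r :: int
  assumes "[y = -1] (mod r)"
  shows "[(\<Sum>i<n. (-y) ^ i) = int n] (mod r)"
proof -
  have "[-y = 1] (mod r)" using assms by (metis cong_minus_minus_iff minus_minus)
  hence "[(\<Sum>i<n. (-y) ^ i) = (\<Sum>i<n. 1)] (mod r)"
    by (intro cong_sum) (metis cong_pow power_one)
  thus ?thesis by simp
qed

lemma dvd_pow_self_plus_one:
  fixes x :: int
  assumes "odd m" and "\<And>r. prime r \<Longrightarrow> r dvd m \<Longrightarrow> int r dvd x + 1"
  shows "int m dvd x ^ m + 1"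
  using assms
proof (induction m rule: less_induct)
  case (less m)
  show ?case
  proof (cases "m = 1")
    case False
    with less.prems have "m > 1" by (cases m) auto
    then obtain r where r: "prime r" "r dvd m" using prime_factor_nat[of m] by auto
    then obtain m' where m: "m = r * m'" by blast
    have odd: "odd r" "odd m'" using less.prems(1) m by auto
    have "m' < m" using m odd_pos[OF odd(2)] prime_gt_1_nat[OF r(1)] by (simp add: n_less_m_mult_n)
    with less have IH: "int m' dvd x ^ m' + 1" using m odd by auto
    define y where "y = x ^ m'"
    have "[x = -1] (mod int r)" using less.prems(2)[OF r] by (simp add: cong_iff_dvd_diff)
    hence "[y = (-1) ^ m'] (mod int r)" unfolding y_def by (rule cong_pow)
    hence "[y = -1] (mod int r)" using odd by simp
    hence "int r dvd (\<Sum>i<r. (-y) ^ i)"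
      using alternating_sum_cong[of y "int r" r] by (simp add: cong_dvd_iff)
    hence "int m' * int r dvd (y + 1) * (\<Sum>i<r. (-y) ^ i)"
      using IH unfolding y_def by (intro mult_dvd_mono)
    also have "\<dots> = y ^ r + 1" using pow_plus_one_eq_mult_alternating_sum[OF odd(1)] by simp
    finally show ?thesis unfolding y_def m by (simp add: power_mult mult.commute)
  qed simp
qed

lemma multiplicity_two_pow_times_odd:
  fixes x :: nat
  assumes "odd x"
  shows "multiplicity 2 (2 ^ j * x) = j"
  using assms by (simp add: mult.commute multiplicity_prime_elem_times_other)

lemma multiplicity_two_pow_plus_one_odd:
  fixes p n :: nat
  assumes "odd p" "odd n"
  shows "multiplicity 2 (p ^ n + 1) = multiplicity 2 (p + 1)"
proof -
  define T where "T = (\<Sum>i<n. (- int p) ^ i)"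
  have T: "int (p ^ n + 1) = int (p + 1) * T"
    using pow_plus_one_eq_mult_alternating_sum[OF assms(2)] unfolding T_def by (simp add: add.commute)
  hence "p + 1 dvd p ^ n + 1" by (metis dvd_triv_left int_dvd_int_iff)
  then obtain S where S: "p ^ n + 1 = (p + 1) * S" by blast
  with T have "int (p + 1) * int S = int (p + 1) * T" by (metis of_nat_mult)
  hence "int S = T" by simp
  moreover have "[T = int n] (mod 2)"
    unfolding T_def using assms(1) by (intro alternating_sum_cong) (simp add: cong_iff_dvd_diff)
  ultimately have "odd S" using assms(2) by (metis cong_0_iff cong_dvd_iff even_of_nat)
  hence "multiplicity 2 S = 0" by (simp add: not_dvd_imp_multiplicity_0)
  moreover have "multiplicity 2 ((p + 1) * S) = multiplicity 2 (p + 1) + multiplicity 2 S"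
    using odd_pos[OF \<open>odd S\<close>] by (intro prime_elem_multiplicity_mult_distrib) auto
  ultimately show ?thesis unfolding S by simp
qed

lemma four_not_dvd_pow_plus_one_even:
  fixes p n :: nat
  assumes "odd p" "even n"
  shows "\<not> 4 dvd p ^ n + 1"
proof -
  obtain t where "p = 2 * t + 1" using assms(1) oddE by blast
  hence "p ^ 2 = 4 * (t * t + t) + 1" by (simp add: power2_eq_square algebra_simps)
  hence "[p ^ 2 = 1] (mod 4)" by (simp add: cong_def)
  hence "[(p ^ 2) ^ (n div 2) = 1] (mod 4)" by (metis cong_pow power_one)
  moreover have "(p ^ 2) ^ (n div 2) = p ^ n" using assms(2) by (simp flip: power_mult)
  ultimately have "[p ^ n + 1 = 1 + 1] (mod 4)" by (intro cong_add) auto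
  thus ?thesis by (simp add: cong_def dvd_eq_mod_eq_0)
qed

lemma prime_dvd_plus_one_iff:
  fixes x :: int and r :: nat
  assumes "prime r" "odd r"
  shows "int r dvd x + 1 \<longleftrightarrow> [x ^ 2 = 1] (mod int r) \<and> \<not> [x = 1] (mod int r)"
proof
  assume "int r dvd x + 1"
  hence minus_one: "[x = -1] (mod int r)" by (simp add: cong_iff_dvd_diff)
  hence "[x ^ 2 = (-1) ^ 2] (mod int r)" by (rule cong_pow)
  moreover have "\<not> [x = 1] (mod int r)"
  proof
    assume "[x = 1] (mod int r)"
    hence "[1 = -1] (mod int r)" using minus_one by (metis cong_def)
    hence "r dvd 2" by (simp add: cong_iff_dvd_diff flip: int_dvd_int_iff)
    hence "r \<le> 2" by (simp add: dvd_imp_le)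
    with assms show False by (metis even_numeral le_antisym prime_ge_2_nat)
  qed
  ultimately show "[x ^ 2 = 1] (mod int r) \<and> \<not> [x = 1] (mod int r)" by simp
next
  assume "[x ^ 2 = 1] (mod int r) \<and> \<not> [x = 1] (mod int r)"
  moreover have "x ^ 2 - 1 = (x - 1) * (x + 1)" by (simp add: algebra_simps power2_eq_square)
  ultimately show "int r dvd x + 1"
    using assms(1) by (auto simp: cong_iff_dvd_diff prime_dvd_mult_iff)
qed

lemma odd_prime_dvd_pow_plus_one_iff_ord:
  fixes p r n :: nat
  assumes "prime r" "odd r"
  shows "r dvd p ^ n + 1 \<longleftrightarrow> ord r p dvd 2 * n \<and> \<not> ord r p dvd n"
proof -
  have "r dvd p ^ n + 1 \<longleftrightarrow> int r dvd int p ^ n + 1"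
    by (simp add: add.commute flip: int_dvd_int_iff)
  also have "\<dots> \<longleftrightarrow> [(int p ^ n) ^ 2 = 1] (mod int r) \<and> \<not> [int p ^ n = 1] (mod int r)"
    using assms by (rule prime_dvd_plus_one_iff)
  also have "\<dots> \<longleftrightarrow> [p ^ (2 * n) = 1] (mod r) \<and> \<not> [p ^ n = 1] (mod r)"
    by (simp flip: cong_int_iff add: power_mult mult.commute)
  also have "\<dots> \<longleftrightarrow> ord r p dvd 2 * n \<and> \<not> ord r p dvd n"
    by (simp add: ord_divides')
  finally show ?thesis .
qed

lemma multiplicity_two_of_dvd_double:
  fixes a n :: nat
  assumes "n > 0" "a dvd 2 * n"
  shows "\<not> a dvd n \<longleftrightarrow> multiplicity 2 a = Suc (multiplicity 2 n)"
proof
  have "multiplicity 2 a \<le> multiplicity 2 (2 * n)"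
    using assms by (intro dvd_imp_multiplicity_le) auto
  also have "\<dots> = Suc (multiplicity 2 n)" using assms(1) by (intro multiplicity_times_same) auto
  finally have le: "multiplicity 2 a \<le> Suc (multiplicity 2 n)" .
  assume "\<not> a dvd n"
  moreover have "a dvd n" if "multiplicity 2 a \<le> multiplicity 2 n"
  proof (rule multiplicity_le_imp_dvd)
    show "a \<noteq> 0" using assms by (metis dvd_0_left mult_pos_pos not_gr0 zero_less_numeral)
    fix q :: nat assume q: "prime q"
    show "multiplicity q a \<le> multiplicity q n"
    proof (cases "q = 2")
      case False
      with q have "\<not> q dvd 2" using primes_dvd_imp_eq two_is_prime_nat by blast
      hence "multiplicity q (2 * n) = multiplicity q n"
        using q assms(1) by (simp add: prime_elem_multiplicity_mult_distrib not_dvd_imp_multiplicity_0)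
      moreover have "multiplicity q a \<le> multiplicity q (2 * n)"
        using assms by (intro dvd_imp_multiplicity_le) auto
      ultimately show ?thesis by simp
    qed (use that in simp)
  qed
  ultimately show "multiplicity 2 a = Suc (multiplicity 2 n)" using le by linarith
next
  assume "multiplicity 2 a = Suc (multiplicity 2 n)"
  thus "\<not> a dvd n" using assms(1) dvd_imp_multiplicity_le[of a n 2] by auto
qed

lemma odd_prime_dvd_pow_plus_one_iff:
  fixes p r n :: nat
  assumes "prime r" "odd r" "n > 0"
  shows "r dvd p ^ n + 1 \<longleftrightarrow> ord r p dvd 2 * n \<and> multiplicity 2 (ord r p) = Suc (multiplicity 2 n)"
  using odd_prime_dvd_pow_plus_one_iff_ord[OF assms(1,2)] multiplicity_two_of_dvd_double[OF assms(3)]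
  by blast

lemma dvd_pow_plus_one_in_Uk:
  fixes p n d :: nat
  assumes p: "prime p" and "n > 0" "d > 0" and d: "d dvd p ^ n + 1"
  shows "d \<in> Uk p (multiplicity 2 n + 1)"
proof -
  have "coprime d p"
  proof (rule ccontr)
    assume "\<not> coprime d p"
    hence "p dvd p ^ n + 1" using p d by (metis coprime_commute prime_imp_coprime dvd_trans)
    moreover have "p dvd p ^ n" using \<open>n > 0\<close> by simp
    ultimately have "p dvd 1" by (metis dvd_add_right_iff)
    thus False using p by simp
  qed
  moreover have "multiplicity 2 (ord r p) = multiplicity 2 n + 1"
    if "prime r" "odd r" "r dvd d" for r
    using odd_prime_dvd_pow_plus_one_iff[OF that(1,2) \<open>n > 0\<close>] dvd_trans[OF that(3) d] by simp
  moreover have "multiplicity 2 d \<le> multiplicity 2 (p + 1)"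
    if "p > 2" "multiplicity 2 n = 0"
  proof -
    have "odd p" "odd n" using p that \<open>n > 0\<close> by (auto simp: prime_odd_nat multiplicity_eq_zero_iff)
    have "multiplicity 2 d \<le> multiplicity 2 (p ^ n + 1)"
      using d by (intro dvd_imp_multiplicity_le) auto
    thus ?thesis using multiplicity_two_pow_plus_one_odd[OF \<open>odd p\<close> \<open>odd n\<close>] by simp
  qed
  moreover have "multiplicity 2 d \<le> 1" if "p > 2" "multiplicity 2 n > 0"
  proof (rule ccontr)
    assume "\<not> multiplicity 2 d \<le> 1"
    hence "2 ^ 2 dvd d" by (intro multiplicity_dvd') simp
    hence "4 dvd p ^ n + 1" using d by (simp add: dvd_trans)
    moreover have "odd p" "even n"
      using p that multiplicity_gt_zero_iff[of n 2] by (auto simp: prime_odd_nat)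
    ultimately show False using four_not_dvd_pow_plus_one_even by blast
  qed
  ultimately show ?thesis using \<open>d > 0\<close> unfolding Uk_def by auto
qed

lemma odd_dvd_pow_plus_one_of_ord:
  fixes p m k :: nat
  assumes "k \<ge> 1" "odd m" and ord: "\<And>r. prime r \<Longrightarrow> r dvd m \<Longrightarrow> multiplicity 2 (ord r p) = k"
  shows "\<exists>n>0. multiplicity 2 n = k - 1 \<and> m dvd p ^ n + 1"
proof -
  obtain b w :: nat where w: "fact m = 2 ^ b * w" "odd w"
    by (rule multiplicity_decompose'[of "fact m :: nat" 2]) auto
  define N where "N = 2 ^ (k - 1) * w"
  \<comment> \<open>\<open>w\<close> is a multiple of the odd part of every order \<open>ord r p\<close>, as these are at most \<open>m\<close>.\<close>
  have "N > 0" "multiplicity 2 N = k - 1"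
    unfolding N_def using w(2) by (auto intro: odd_pos multiplicity_two_pow_times_odd)
  have "int r dvd int p ^ N + 1" if r: "prime r" "r dvd m" for r
  proof -
    have "odd r" using r(2) assms(2) by (metis dvd_trans)
    have "multiplicity 2 (ord r p) = k" using ord[OF r] .
    with assms(1) have "ord r p \<noteq> 0" by (metis multiplicity_zero not_one_le_zero)
    then obtain q where q: "ord r p = 2 ^ k * q" "odd q"
      using multiplicity_decompose'[of "ord r p" 2] \<open>multiplicity 2 (ord r p) = k\<close> by auto
    have "ord r p dvd totient r" using \<open>ord r p \<noteq> 0\<close> by (simp add: ord_eq_0 order_divides_totient)
    hence "ord r p \<le> totient r" using prime_gt_0_nat[OF r(1)] by (intro dvd_imp_le) simp_all
    also have "\<dots> \<le> r" by (rule totient_le)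
    also have "r \<le> m" using r(2) odd_pos[OF assms(2)] by (rule dvd_imp_le)
    finally have "ord r p \<le> m" .
    moreover have "1 \<le> ord r p" using \<open>ord r p \<noteq> 0\<close> by linarith
    ultimately have "ord r p dvd fact m" by (intro dvd_fact)
    hence "q dvd 2 ^ b * w" using w(1) q(1) by (simp add: dvd_mult_right)
    hence "q dvd w" using q(2) by (simp add: coprime_dvd_mult_right_iff)
    moreover have "2 * N = 2 ^ k * w" unfolding N_def using assms(1) by (cases k) auto
    ultimately have "ord r p dvd 2 * N" unfolding q(1) by simp
    moreover have "multiplicity 2 (ord r p) = Suc (multiplicity 2 N)"
      using \<open>multiplicity 2 (ord r p) = k\<close> \<open>multiplicity 2 N = k - 1\<close> assms(1) by simp
    ultimately have "r dvd p ^ N + 1"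
      using odd_prime_dvd_pow_plus_one_iff[OF r(1) \<open>odd r\<close> \<open>N > 0\<close>] by simp
    thus ?thesis by (simp add: add.commute flip: int_dvd_int_iff)
  qed
  hence "int m dvd (int p ^ N) ^ m + 1" using assms(2) by (intro dvd_pow_self_plus_one)
  hence "m dvd p ^ (N * m) + 1" by (simp add: power_mult add.commute flip: int_dvd_int_iff)
  moreover have "multiplicity 2 (N * m) = k - 1"
    unfolding N_def using w(2) assms(2) by (simp add: mult.assoc multiplicity_two_pow_times_odd)
  ultimately show ?thesis using \<open>N > 0\<close> odd_pos[OF assms(2)] by (metis nat_0_less_mult_iff)
qed

lemma Uk_subset_U:
  fixes p k :: nat
  assumes p: "prime p" and "k \<ge> 1"
  shows "Uk p k \<subseteq> U p"
proof
  fix d assume "d \<in> Uk p k"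
  hence d: "d > 0" "coprime d p"
    and ord: "\<And>r. prime r \<Longrightarrow> odd r \<Longrightarrow> r dvd d \<Longrightarrow> multiplicity 2 (ord r p) = k"
    and two_one: "p > 2 \<Longrightarrow> k = 1 \<Longrightarrow> multiplicity 2 d \<le> multiplicity 2 (p + 1)"
    and two_many: "p > 2 \<Longrightarrow> k > 1 \<Longrightarrow> multiplicity 2 d \<le> 1"
    unfolding Uk_def by auto
  define a where "a = multiplicity 2 d"
  obtain m where dm: "d = 2 ^ a * m" and "odd m"
    using multiplicity_decompose'[of d 2] d(1) unfolding a_def by auto
  have "multiplicity 2 (ord r p) = k" if "prime r" "r dvd m" for r
  proof (rule ord[OF that(1)])
    show "odd r" using that(2) \<open>odd m\<close> by (auto elim: dvd_trans)
    show "r dvd d" using that(2) unfolding dm by simp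
  qed
  then obtain n where "n > 0" "multiplicity 2 n = k - 1" "m dvd p ^ n + 1"
    using odd_dvd_pow_plus_one_of_ord[OF \<open>k \<ge> 1\<close> \<open>odd m\<close>] by blast
  moreover have "a \<le> multiplicity 2 (p ^ n + 1)"
  proof (cases "p = 2")
    case True
    with d(2) have "a = 0" unfolding a_def by (simp add: not_dvd_imp_multiplicity_0)
    thus ?thesis by simp
  next
    case False
    with p have "p > 2" using prime_ge_2_nat[OF p] by linarith
    with p have "odd p" by (simp add: prime_odd_nat)
    show ?thesis
    proof (cases "k = 1")
      case True
      with \<open>multiplicity 2 n = k - 1\<close> \<open>n > 0\<close> have "odd n" by (simp add: multiplicity_eq_zero_iff)
      thus ?thesis using two_one[OF \<open>p > 2\<close> True] multiplicity_two_pow_plus_one_odd[OF \<open>odd p\<close>]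
        unfolding a_def by simp
    next
      case False
      have "multiplicity 2 (p ^ n + 1) > 0" using \<open>odd p\<close> by (simp add: multiplicity_gt_zero_iff)
      thus ?thesis using two_many[OF \<open>p > 2\<close>] False \<open>k \<ge> 1\<close> unfolding a_def by simp
    qed
  qed
  ultimately have "d dvd p ^ n + 1"
    unfolding dm using \<open>odd m\<close> by (intro divides_mult multiplicity_dvd') simp_all
  with \<open>n > 0\<close> d(1) show "d \<in> U p" unfolding U_def by blast
qed

theorem lemma2:
  fixes p :: nat
  assumes "prime p"
  shows "U p = (\<Union>k\<in>{1..}. Uk p k)"
proof
  show "U p \<subseteq> (\<Union>k\<in>{1..}. Uk p k)"
  proof
    fix d assume "d \<in> U p"
    then obtain n where "d > 0" "n > 0" "d dvd p ^ n + 1" unfolding U_def by auto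
    hence "d \<in> Uk p (multiplicity 2 n + 1)" using assms by (intro dvd_pow_plus_one_in_Uk)
    thus "d \<in> (\<Union>k\<in>{1..}. Uk p k)" by auto
  qed
  show "(\<Union>k\<in>{1..}. Uk p k) \<subseteq> U p" using Uk_subset_U[OF assms] by auto
qed

end
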